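(* Let $G>0$, $a\ge\frac{3\pi G^2}{4}$, $\sigma^2=\pi/2$, and let $(\beta_t)_{t\ge1}$ be positive reals with $\beta_{t+1}\le\beta_t$ for all $t$. For $t\ge1$ define $f_t(x)=\beta_t\exp\big(\frac{x^2}{2at}\big)$. Then for every $t\ge1$, \[ \arg\max_{x\in\mathbb{R}}\ \Big(\mathbb{E}_{\phi\sim N(0,\sigma^2)}\big[f_{t+1}(x+\phi G)\big]-f_t(x)\Big)=0, \] i.e. the maximum over $x$ is attained at $x=0$. *)

theory Defs
  imports "HOL-Probability.Probability"
begin

definition ft :: "real \<Rightarrow> (nat \<Rightarrow> real) \<Rightarrow> nat \<Rightarrow> real \<Rightarrow> real" where
  "ft a \<beta> t x = \<beta> t * exp (x\<^sup>2 / (2 * a * real t))"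

definition gauss_expect :: "real \<Rightarrow> (real \<Rightarrow> real) \<Rightarrow> real" where
  "gauss_expect s h = (\<integral>\<phi>. h \<phi> \<partial>(density lborel (normal_density 0 s)))"

end

theory Submission imports Defs begin

text \<open>Completing the square, the Gaussian expectation of \<open>exp (c (x + \<phi> G)\<^sup>2)\<close> is
\<open>exp (c x\<^sup>2 / r) / sqrt r\<close> with \<open>r = 1 - 2 c \<sigma>\<^sup>2 G\<^sup>2\<close>. For \<open>f\<^sub>t\<^sub>+\<^sub>1\<close> this is
\<open>K exp (e x\<^sup>2)\<close> with \<open>e = 1 / (2 a (t+1) - \<pi> G\<^sup>2)\<close> below the exponent \<open>d = 1 / (2 a t)\<close> of \<open>f\<^sub>t\<close>,
and the bound on \<open>a\<close> gives \<open>K e \<le> d\<close>. As \<open>\<beta>\<close> is non-increasing, the objective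
\<open>A exp (e x\<^sup>2) - B exp (d x\<^sup>2)\<close> has \<open>0 < e < d\<close> and \<open>A e \<le> B d\<close>, so its derivative in \<open>x\<^sup>2\<close> is
negative and \<open>x = 0\<close> is the unique maximiser.\<close>

lemma normal_density_mult_exp_square:
  fixes \<sigma> c G x \<phi> r :: real
  assumes \<sigma>: "\<sigma> > 0" and r: "r = 1 - 2*c*\<sigma>^2*G^2" "r > 0"
  shows "normal_density 0 \<sigma> \<phi> * exp (c*(x + \<phi>*G)^2)
       = exp (c*x^2/r) / sqrt r * normal_density (2*c*\<sigma>^2*x*G/r) (\<sigma>/sqrt r) \<phi>"
proof -
  have "(\<sigma>/sqrt r)^2 = \<sigma>^2/r"
    using r by (simp add: power_divide)
  then have "(- (\<phi>^2) / (2*\<sigma>^2) + c*(x + \<phi>*G)^2)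
      - (c*x^2/r + - ((\<phi> - 2*c*\<sigma>^2*x*G/r)^2) / (2*(\<sigma>/sqrt r)^2))
      = (r - 1 + 2*c*\<sigma>^2*G^2) * (\<phi>^2/(2*\<sigma>^2) + c*x^2/r)"
    using \<sigma> r(2) by (simp add: field_simps power2_eq_square)
  then have exponent: "- (\<phi>^2) / (2*\<sigma>^2) + c*(x + \<phi>*G)^2
      = c*x^2/r + - ((\<phi> - 2*c*\<sigma>^2*x*G/r)^2) / (2*(\<sigma>/sqrt r)^2)"
    using r(1) by simp
  have scale: "1 / sqrt (2*pi*\<sigma>^2) = 1 / sqrt r * (1 / sqrt (2*pi*(\<sigma>/sqrt r)^2))"
    using \<sigma> r by (simp add: power_divide real_sqrt_divide real_sqrt_mult)
  have "normal_density 0 \<sigma> \<phi> * exp (c*(x + \<phi>*G)^2)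
      = 1 / sqrt (2*pi*\<sigma>^2) * exp (- (\<phi>^2) / (2*\<sigma>^2) + c*(x + \<phi>*G)^2)"
    by (simp add: normal_density_def exp_add[symmetric])
  also have "\<dots> = exp (c*x^2/r) / sqrt r * normal_density (2*c*\<sigma>^2*x*G/r) (\<sigma>/sqrt r) \<phi>"
    unfolding exponent scale exp_add normal_density_def by simp
  finally show ?thesis .
qed

lemma gauss_expect_exp_square:
  fixes \<sigma> c G x r :: real
  assumes \<sigma>: "\<sigma> > 0" and r: "r = 1 - 2*c*\<sigma>^2*G^2" "r > 0"
  shows "gauss_expect \<sigma> (\<lambda>\<phi>. exp (c*(x + \<phi>*G)^2)) = exp (c*x^2/r) / sqrt r"
proof -
  have "gauss_expect \<sigma> (\<lambda>\<phi>. exp (c*(x + \<phi>*G)^2))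
      = (\<integral>\<phi>. normal_density 0 \<sigma> \<phi> *\<^sub>R exp (c*(x + \<phi>*G)^2) \<partial>lborel)"
    unfolding gauss_expect_def by (rule integral_density) auto
  also have "\<dots> = (\<integral>\<phi>. exp (c*x^2/r) / sqrt r
                    * normal_density (2*c*\<sigma>^2*x*G/r) (\<sigma>/sqrt r) \<phi> \<partial>lborel)"
    using normal_density_mult_exp_square[OF \<sigma> r] by simp
  also have "\<dots> = exp (c*x^2/r) / sqrt r"
    using \<sigma> r by simp
  finally show ?thesis .
qed

lemma gauss_expect_ft_shift:
  fixes a G y :: real and \<beta> :: "nat \<Rightarrow> real" and n :: nat
  assumes "2*a*real n > pi*G^2"
  shows "gauss_expect (sqrt (pi/2)) (\<lambda>\<phi>. ft a \<beta> n (y + \<phi>*G))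
       = \<beta> n * sqrt (2*a*real n / (2*a*real n - pi*G^2)) * exp (y^2 / (2*a*real n - pi*G^2))"
proof -
  define m where "m = 2*a*real n"
  have "pi*G^2 \<ge> 0" by simp
  then have m: "m > 0" "m - pi*G^2 > 0"
    using assms unfolding m_def by linarith+
  define r where "r = 1 - 2*(1/m)*(sqrt (pi/2))^2*G^2"
  have r_eq: "r = (m - pi*G^2)/m"
    using m by (simp add: r_def field_simps)
  have "gauss_expect (sqrt (pi/2)) (\<lambda>\<phi>. ft a \<beta> n (y + \<phi>*G))
      = \<beta> n * gauss_expect (sqrt (pi/2)) (\<lambda>\<phi>. exp ((1/m)*(y + \<phi>*G)^2))"
    by (simp add: ft_def gauss_expect_def m_def)
  also have "\<dots> = \<beta> n * (exp ((1/m)*y^2/r) / sqrt r)"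
    using gauss_expect_exp_square[OF _ r_def] m by (simp add: r_eq)
  also have "\<dots> = \<beta> n * sqrt (m / (m - pi*G^2)) * exp (y^2 / (m - pi*G^2))"
    using m by (simp add: r_eq real_sqrt_divide field_simps)
  finally show ?thesis by (simp add: m_def)
qed

lemma expected_growth_coefficient_le:
  fixes a P T :: real
  assumes T: "T \<ge> 1" and P: "P > 0" and a: "4*a \<ge> 3*P"
  shows "sqrt (2*a*(T+1) / (2*a*(T+1) - P)) / (2*a*(T+1) - P) \<le> 1 / (2*a*T)"
proof -
  define m where "m = 2*a*(T+1)"
  define b where "b = m - P"
  have a0: "a > 0" using P a by simp
  have b_ge: "b \<ge> 2*a*(T + 1/3)"
    using a by (simp add: b_def m_def algebra_simps)
  have "2*a*(T + 1/3) > 0" using a0 T by simp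
  with b_ge have b0: "b > 0" by linarith
  have aT0: "2*a*T > 0" using a0 T by simp
  have "T^2*(T+1) \<le> (T + 1/3)^3"
    using T by (simp add: power3_eq_cube power2_eq_square field_simps)
  then have "(2*a)^3 * (T^2*(T+1)) \<le> (2*a)^3 * (T + 1/3)^3"
    using a0 by simp
  moreover have "m*(2*a*T)^2 = (2*a)^3 * (T^2*(T+1))"
    by (simp add: m_def power3_eq_cube power2_eq_square)
  moreover have "(2*a*(T + 1/3))^3 = (2*a)^3 * (T + 1/3)^3"
    by (rule power_mult_distrib)
  ultimately have "m*(2*a*T)^2 \<le> (2*a*(T + 1/3))^3"
    by (simp only:)
  also have "\<dots> \<le> b^3"
    using b_ge a0 T by (intro power_mono) auto
  finally have cube: "m*(2*a*T)^2 \<le> b^3" .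
  have "(sqrt (m/b) / b)^2 = m / b^3"
    using b0 a0 T by (simp add: m_def power_divide power3_eq_cube power2_eq_square)
  also have "\<dots> \<le> (1 / (2*a*T))^2"
    using cube b0 aT0 by (auto simp: divide_le_eq le_divide_eq power_divide)
  finally have "sqrt (m/b) / b \<le> 1 / (2*a*T)"
    by (rule power2_le_imp_le) (use aT0 in simp)
  then show ?thesis
    by (simp add: m_def b_def)
qed

lemma exp_diff_less_at_zero:
  fixes A B e d u :: real
  assumes "0 < e" "e < d" "0 < A" "A*e \<le> B*d" "u > 0"
  shows "A*exp (e*u) - B*exp (d*u) < A - B"
proof -
  let ?h = "\<lambda>z. B*exp (d*z) - A*exp (e*z)"
  have "?h 0 < ?h u"
  proof (rule DERIV_pos_imp_increasing_open[OF \<open>u > 0\<close>])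
    fix w :: real assume "0 < w" "w < u"
    then have "exp (e*w) < exp (d*w)"
      using assms by simp
    then have "A*e*exp (e*w) < A*e*exp (d*w)"
      using assms by simp
    also have "\<dots> \<le> B*d*exp (d*w)"
      using assms by (intro mult_right_mono) auto
    finally have "A*e*exp (e*w) < B*d*exp (d*w)" .
    moreover have "DERIV ?h w :> B*(exp (d*w)*d) - A*(exp (e*w)*e)"
      by (auto intro!: derivative_eq_intros)
    ultimately show "\<exists>y. DERIV ?h w :> y \<and> y > 0"
      by (auto simp: algebra_simps)
  qed (intro continuous_intros)
  then show ?thesis by simp
qed

lemma maximizers_eq_singleton:
  fixes g :: "'a \<Rightarrow> 'b::linorder"
  assumes "\<And>y. y \<noteq> x\<^sub>0 \<Longrightarrow> g y < g x\<^sub>0"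
  shows "{x. \<forall>y. g y \<le> g x} = {x\<^sub>0}"
proof -
  have "g y \<le> g x\<^sub>0" for y
    using assms[of y] by (cases "y = x\<^sub>0") auto
  moreover have "\<not> (\<forall>y. g y \<le> g x)" if "x \<noteq> x\<^sub>0" for x
    using assms[OF that] by (meson not_le)
  ultimately show ?thesis by blast
qed

theorem lemma17:
  fixes G a :: real and \<beta> :: "nat \<Rightarrow> real" and t :: nat
  assumes "G > 0"
    and "a \<ge> 3 * pi * G\<^sup>2 / 4"
    and "\<And>s. s \<ge> 1 \<Longrightarrow> \<beta> s > 0"
    and "\<And>s. s \<ge> 1 \<Longrightarrow> \<beta> (s + 1) \<le> \<beta> s"
    and "t \<ge> 1"
  shows "{x::real. \<forall>y::real.
            gauss_expect (sqrt (pi / 2)) (\<lambda>\<phi>. ft a \<beta> (t + 1) (y + \<phi> * G)) - ft a \<beta> t y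
          \<le> gauss_expect (sqrt (pi / 2)) (\<lambda>\<phi>. ft a \<beta> (t + 1) (x + \<phi> * G)) - ft a \<beta> t x}
         = {0}"
proof -
  define T P m where "T = real t" and "P = pi*G^2" and "m = 2*a*(T+1)"
  have T: "T \<ge> 1" and P: "P > 0" and a: "4*a \<ge> 3*P"
    using assms(1,2,5) by (auto simp: T_def P_def)
  then have aT: "2*a*T > 0" and mP: "m - P > 2*a*T"
    by (auto simp: m_def algebra_simps)
  then have m_pos: "m - P > 0" "m > 0"
    using P by linarith+
  define A where "A = \<beta> (t+1) * sqrt (m/(m-P))"
  define g where "g y = A*exp (y^2/(m-P)) - \<beta> t*exp (y^2/(2*a*T))" for y
  have objective: "gauss_expect (sqrt (pi/2)) (\<lambda>\<phi>. ft a \<beta> (t+1) (y + \<phi>*G)) - ft a \<beta> t y = g y"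
    for y
    using gauss_expect_ft_shift[of G a "t+1"] m_pos
    by (simp add: g_def A_def m_def T_def P_def ft_def add.commute)
  have \<beta>: "0 < \<beta> (t+1)" "\<beta> (t+1) \<le> \<beta> t"
    using assms(3,4,5) by auto
  have "\<beta> (t+1) * (sqrt (m/(m-P)) / (m-P)) \<le> \<beta> t * (1/(2*a*T))"
    using expected_growth_coefficient_le[OF T P a, folded m_def] \<beta> m_pos
    by (intro mult_mono) auto
  then have "g y < g 0" if "y \<noteq> 0" for y
    using exp_diff_less_at_zero[of "1/(m-P)" "1/(2*a*T)" A "\<beta> t" "y^2"] that \<beta> mP aT m_pos
    by (simp add: g_def A_def frac_less2)
  then show ?thesis
    unfolding objective by (rule maximizers_eq_singleton)
qed

end
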